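(* For all integers $n\ge k\ge1$, there exists a monotone $(n-k)$-admissible $k$-CNF formula $F$ on $n$ variables with $|\mathrm{sat}_{n-k}(F)|=S(n,n-k,k)$.
   Context: A $k$-CNF formula is a conjunction of clauses (disjunctions of literals) each of width at most $k$; it is monotone if no literal is negated. $\mathrm{sat}_t(F)$ is the set of satisfying assignments of Hamming weight exactly $t$; $F$ is $t$-admissible if it has no satisfying assignment of Hamming weight less than $t$; $S(n,t,k)$ is the maximum of $|\mathrm{sat}_t(F)|$ over all $t$-admissible $k$-CNF formulas $F$ on $n$ variables. *)

theory Defs
  imports Main
begin

text \<open>Variables are natural numbers; a formula on n variables uses variables 0..n-1.
A literal is a pair (i, b): b = True means the positive literal x_i, b = False means its negation.
An assignment is identified with the set of variables set to true; its Hamming weight is its cardinality.\<close>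

type_synonym lit = "nat \<times> bool"
type_synonym clause = "lit set"
type_synonym cnf = "clause set"

definition is_kCNF :: "nat \<Rightarrow> nat \<Rightarrow> cnf \<Rightarrow> bool" where
  "is_kCNF n k F \<longleftrightarrow> (\<forall>C\<in>F. finite C \<and> card C \<le> k \<and> (\<forall>(i, b)\<in>C. i < n))"

definition monotone_cnf :: "cnf \<Rightarrow> bool" where
  "monotone_cnf F \<longleftrightarrow> (\<forall>C\<in>F. \<forall>(i, b)\<in>C. b)"

definition satisfies :: "nat set \<Rightarrow> cnf \<Rightarrow> bool" where
  "satisfies A F \<longleftrightarrow> (\<forall>C\<in>F. \<exists>(i, b)\<in>C. (i \<in> A) = b)"

definition sat_t :: "nat \<Rightarrow> nat \<Rightarrow> cnf \<Rightarrow> nat set set" where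
  "sat_t n t F = {A. A \<subseteq> {0..<n} \<and> card A = t \<and> satisfies A F}"

definition admissible :: "nat \<Rightarrow> nat \<Rightarrow> cnf \<Rightarrow> bool" where
  "admissible n t F \<longleftrightarrow> (\<forall>A. A \<subseteq> {0..<n} \<and> card A < t \<longrightarrow> \<not> satisfies A F)"

definition S :: "nat \<Rightarrow> nat \<Rightarrow> nat \<Rightarrow> nat" where
  "S n t k = Max {card (sat_t n t F) | F. is_kCNF n k F \<and> admissible n t F}"

end

theory Submission
  imports Defs
begin

text \<open>Let F attain S(n, n-k, k) and let G be its set of weight-(n-k) solutions. The monotone
k-CNF whose clauses are the k-sets B with [n] - B \<notin> G still accepts every member of G. It is
(n-k)-admissible: a lighter solution A would leave a (k+1)-set D outside A such that every
[n] - (D - {x}) with x \<in> D lies in G. Each clause of F misses some x \<in> D, so [n] - D satisfies F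
as well, contradicting the admissibility of F at weight n-k-1.\<close>

lemma sat_t_subset_Pow: "sat_t n t F \<subseteq> Pow {0..<n}"
  by (auto simp: sat_t_def)

lemma finite_sat_t: "finite (sat_t n t F)"
  using finite_subset[OF sat_t_subset_Pow] by blast

lemma S_attained:
  "\<exists>F. is_kCNF n k F \<and> admissible n t F \<and> card (sat_t n t F) = S n t k"
  and card_sat_t_le_S:
  "is_kCNF n k F \<Longrightarrow> admissible n t F \<Longrightarrow> card (sat_t n t F) \<le> S n t k"
proof -
  let ?M = "{card (sat_t n t F) | F. is_kCNF n k F \<and> admissible n t F}"
  have "?M \<subseteq> {..2 ^ n}"
    using card_mono[OF _ sat_t_subset_Pow] by (force simp: card_Pow)
  hence fin: "finite ?M"
    by (rule finite_subset) simp
  have "is_kCNF n k {{}} \<and> admissible n t {{}}"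
    by (auto simp: is_kCNF_def admissible_def satisfies_def)
  hence "?M \<noteq> {}" by blast
  with fin have "Max ?M \<in> ?M" by (rule Max_in)
  thus "\<exists>F. is_kCNF n k F \<and> admissible n t F \<and> card (sat_t n t F) = S n t k"
    by (auto simp: S_def)
  show "is_kCNF n k F \<Longrightarrow> admissible n t F \<Longrightarrow> card (sat_t n t F) \<le> S n t k"
    unfolding S_def using fin by (auto intro!: Max_ge)
qed

lemma satisfies_if_satisfies_insert:
  assumes F: "is_kCNF n k F" and D: "k < card D"
    and sat: "\<And>x. x \<in> D \<Longrightarrow> satisfies (insert x A) F"
  shows "satisfies A F"
  unfolding satisfies_def
proof
  fix C assume C: "C \<in> F"
  with F have "finite C" "card C \<le> k" by (auto simp: is_kCNF_def)
  hence "card (fst ` C) < card D"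
    using card_image_le[of C fst] D by linarith
  hence "\<not> D \<subseteq> fst ` C"
    using card_mono[OF finite_imageI[OF \<open>finite C\<close>]] by (meson leD)
  then obtain x where x: "x \<in> D" "x \<notin> fst ` C" by blast
  from sat[OF x(1)] C obtain i b where ib: "(i, b) \<in> C" "(i \<in> insert x A) = b"
    by (auto simp: satisfies_def)
  have "i \<noteq> x" using ib(1) x(2) by force
  with ib show "\<exists>(i, b)\<in>C. (i \<in> A) = b" by auto
qed

definition hitting_cnf :: "nat \<Rightarrow> nat \<Rightarrow> nat set set \<Rightarrow> cnf" where
  "hitting_cnf n k G =
     {(\<lambda>i. (i, True)) ` B | B. B \<subseteq> {0..<n} \<and> card B = k \<and> {0..<n} - B \<notin> G}"

lemma is_kCNF_hitting_cnf: "is_kCNF n k (hitting_cnf n k G)"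
  by (auto simp: is_kCNF_def hitting_cnf_def card_image_le finite_subset)

lemma monotone_hitting_cnf: "monotone_cnf (hitting_cnf n k G)"
  by (auto simp: monotone_cnf_def hitting_cnf_def)

lemma satisfies_hitting_cnf_iff:
  "satisfies A (hitting_cnf n k G) \<longleftrightarrow>
     (\<forall>B. B \<subseteq> {0..<n} \<longrightarrow> card B = k \<longrightarrow> {0..<n} - B \<notin> G \<longrightarrow> A \<inter> B \<noteq> {})"
  unfolding satisfies_def hitting_cnf_def by auto

lemma subset_sat_t_hitting_cnf:
  assumes "G \<subseteq> sat_t n (n - k) F"
  shows "G \<subseteq> sat_t n (n - k) (hitting_cnf n k G)"
proof
  fix A assume "A \<in> G"
  with assms have A: "A \<subseteq> {0..<n}" "card A = n - k" by (auto simp: sat_t_def)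
  have "A \<inter> B \<noteq> {}" if B: "B \<subseteq> {0..<n}" "card B = k" "{0..<n} - B \<notin> G" for B
  proof
    assume "A \<inter> B = {}"
    with A have "A \<subseteq> {0..<n} - B" by blast
    moreover have "card ({0..<n} - B) = n - k"
      using B card_Diff_subset[of B "{0..<n}"] finite_subset[of B "{0..<n}"] by simp
    ultimately have "A = {0..<n} - B"
      using A by (intro card_subset_eq) auto
    with \<open>A \<in> G\<close> B(3) show False by simp
  qed
  with A show "A \<in> sat_t n (n - k) (hitting_cnf n k G)"
    by (simp add: sat_t_def satisfies_hitting_cnf_iff)
qed

lemma admissible_hitting_cnf:
  assumes F: "is_kCNF n k F" and adm: "admissible n (n - k) F"
  shows "admissible n (n - k) (hitting_cnf n k (sat_t n (n - k) F))"
  unfolding admissible_def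
proof (intro allI impI notI)
  let ?G = "sat_t n (n - k) F"
  fix A assume A: "A \<subseteq> {0..<n} \<and> card A < n - k"
    and satA: "satisfies A (hitting_cnf n k ?G)"
  have "card ({0..<n} - A) = n - card A"
    using A card_Diff_subset[of A "{0..<n}"] finite_subset[of A "{0..<n}"] by simp
  with A obtain D where D: "D \<subseteq> {0..<n} - A" "card D = k + 1"
    using obtain_subset_with_card_n[of "k + 1" "{0..<n} - A"] by force
  hence "finite D" by (simp add: finite_subset)
  have "satisfies (insert x ({0..<n} - D)) F" if "x \<in> D" for x
  proof -
    have "card (D - {x}) = k" using that D(2) \<open>finite D\<close> by simp
    moreover have "A \<inter> (D - {x}) = {}" using D(1) by blast
    ultimately have "{0..<n} - (D - {x}) \<in> ?G"
      using satA D(1) unfolding satisfies_hitting_cnf_iff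
      by (metis Diff_subset subset_trans)
    moreover have "{0..<n} - (D - {x}) = insert x ({0..<n} - D)"
      using that D(1) by blast
    ultimately show ?thesis by (simp add: sat_t_def)
  qed
  hence "satisfies ({0..<n} - D) F"
    using satisfies_if_satisfies_insert[OF F] D(2) by (metis less_add_one)
  moreover have "card ({0..<n} - D) < n - k"
  proof -
    have "D \<subseteq> {0..<n}" using D(1) by blast
    hence "k + 1 \<le> n" and "card ({0..<n} - D) = n - (k + 1)"
      using D(2) card_mono[of "{0..<n}" D] card_Diff_subset[of D "{0..<n}"] \<open>finite D\<close> by auto
    thus ?thesis by linarith
  qed
  ultimately show False
    using adm by (auto simp: admissible_def)
qed

theorem lemma5:
  fixes n k :: nat
  assumes "1 \<le> k" and "k \<le> n"
  shows "\<exists>F. is_kCNF n k F \<and> monotone_cnf F \<and> admissible n (n - k) F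
              \<and> card (sat_t n (n - k) F) = S n (n - k) k"
proof -
  obtain F where F: "is_kCNF n k F" "admissible n (n - k) F"
    and opt: "card (sat_t n (n - k) F) = S n (n - k) k"
    using S_attained by blast
  let ?H = "hitting_cnf n k (sat_t n (n - k) F)"
  have adm: "admissible n (n - k) ?H"
    using admissible_hitting_cnf[OF F] .
  have "S n (n - k) k \<le> card (sat_t n (n - k) ?H)"
    using opt card_mono[OF finite_sat_t subset_sat_t_hitting_cnf[OF order_refl, of n k F]]
    by simp
  moreover have "card (sat_t n (n - k) ?H) \<le> S n (n - k) k"
    using card_sat_t_le_S[OF is_kCNF_hitting_cnf adm] .
  ultimately show ?thesis
    using is_kCNF_hitting_cnf monotone_hitting_cnf adm le_antisym by blast
qed

end
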